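(* Let $r\ge 3$ and $s$ be coprime odd integers with $0<s<r$, and set $q=\exp(i\pi s/r)$. Then the Riley algebra $\mathbb{Q}[P(r,s)]\cong\mathbb{Q}[t]/(R(t))$ of the two-bridge knot $K(r,s)$ is isomorphic, as a $\mathbb{Q}$-algebra, to the SO$_3$ signed Verlinde algebra $V_q^+$.
   Context: For an integer $n$ put $[n]=\frac{q^n-q^{-n}}{q-q^{-1}}$ (a real number), $[n]!=[n][n-1]\cdots[1]$, and for $1\le n\le r-1$ let $\epsilon_n=\operatorname{sign}[n]=(-1)^{\lfloor ns/r\rfloor}$ (so $\epsilon_1=1$ and $\epsilon_n=\epsilon_{r-n}$). A triple $(i,j,k)\in\{0,\dots,r-2\}^3$ is $r$-admissible if $i\le j+k$, $j\le i+k$, $k\le i+j$, $i+j+k$ is even and $i+j+k\le 2r-4$; for such a triple write $i=b+c$, $j=a+c$, $k=a+b$ and set $\langle i,j,k\rangle=(-1)^{a+b+c}\frac{[a+b+c+1]![a]![b]![c]!}{[a+b]![a+c]![b+c]!}$ (a nonzero real number). Let $V_q$ be the $\mathbb{Q}$-vector space with basis $e_0,\dots,e_{r-2}$, with the symmetric bilinear form $\eta$ for which this basis is orthogonal and $\eta(e_i,e_i)=(-1)^i\epsilon_{i+1}$, and the symmetric trilinear form $\omega$ with $\omega(e_i,e_j,e_k)=\operatorname{sign}\langle i,j,k\rangle$ if $(i,j,k)$ is $r$-admissible and $0$ otherwise. The product on $V_q$ is defined by $\eta(x\cdot y,z)=\omega(x,y,z)$; this makes $V_q$ a commutative associative unital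 $\mathbb{Q}$-algebra with unit $e_0$ and a Frobenius algebra with counit $\epsilon(f)=\eta(f,e_0)$ (so $\eta(x,y)=\epsilon(xy)$). Let $V_q^+\subset V_q$ be the span of $e_0,e_2,\dots,e_{r-3}$; it is a subalgebra, and a Frobenius algebra with the restrictions $\eta^+,\epsilon^+$ of $\eta,\epsilon$. The two-bridge knot $K(r,s)$ has knot group $G=\langle u,v\mid wu=vw\rangle$ with $w=u^{\epsilon_1}v^{\epsilon_2}u^{\epsilon_3}\cdots u^{\epsilon_{r-2}}v^{\epsilon_{r-1}}$. The Riley polynomial $R(t)\in\mathbb{Z}[t]$ is the upper-left entry of the matrix product $A_1A_2\cdots A_{r-1}$, where $A_k=\begin{pmatrix}1&1\\0&1\end{pmatrix}^{\epsilon_k}$ for $k$ odd and $A_k=\begin{pmatrix}1&0\\t&1\end{pmatrix}^{\epsilon_k}$ for $k$ even. $P(r,s)$ denotes the set of conjugacy classes of representations $\rho:G\to\mathrm{SL}_2(\mathbb{C})$ with $\rho(u)$ parabolic; it is a $0$-dimensional variety over $\mathbb{Q}$ whose algebra of functions $\mathbb{Q}[P(r,s)]$ is $\mathbb{Q}[t]/(R(t))$. *)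

theory Defs
  imports Complex_Main "HOL-Computational_Algebra.Polynomial"
begin

definition qroot :: "nat \<Rightarrow> nat \<Rightarrow> complex" where
  "qroot r s = exp (\<i> * complex_of_real (pi * real s / real r))"

text \<open>[n] = (q^n - q^-n)/(q - q^-1), a real number (we take the real part).\<close>
definition qint :: "nat \<Rightarrow> nat \<Rightarrow> nat \<Rightarrow> real" where
  "qint r s n = Re ((qroot r s ^ n - inverse (qroot r s) ^ n) / (qroot r s - inverse (qroot r s)))"

definition qfact :: "nat \<Rightarrow> nat \<Rightarrow> nat \<Rightarrow> real" where
  "qfact r s n = (\<Prod>m\<in>{1..n}. qint r s m)"

definition sign_real :: "real \<Rightarrow> int" where
  "sign_real x = (if 0 < x then 1 else if x < 0 then -1 else 0)"

definition eps :: "nat \<Rightarrow> nat \<Rightarrow> nat \<Rightarrow> int" where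
  "eps r s n = sign_real (qint r s n)"

definition admissible :: "nat \<Rightarrow> nat \<Rightarrow> nat \<Rightarrow> nat \<Rightarrow> bool" where
  "admissible r i j k \<longleftrightarrow> i \<le> r - 2 \<and> j \<le> r - 2 \<and> k \<le> r - 2 \<and>
     i \<le> j + k \<and> j \<le> i + k \<and> k \<le> i + j \<and> even (i + j + k) \<and> i + j + k \<le> 2 * r - 4"

text \<open>For admissible (i,j,k): i = b+c, j = a+c, k = a+b.\<close>
definition theta :: "nat \<Rightarrow> nat \<Rightarrow> nat \<Rightarrow> nat \<Rightarrow> nat \<Rightarrow> real" where
  "theta r s i j k =
    (let a = (j + k - i) div 2; b = (i + k - j) div 2; c = (i + j - k) div 2 in
     (-1) ^ (a + b + c) * (qfact r s (a + b + c + 1) * qfact r s a * qfact r s b * qfact r s c)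
       / (qfact r s (a + b) * qfact r s (a + c) * qfact r s (b + c)))"

text \<open>Elements of V_q are coefficient vectors x, x k = coefficient of e_k (k \<le> r-2).\<close>
definition Vq :: "nat \<Rightarrow> (nat \<Rightarrow> rat) set" where
  "Vq r = {x. \<forall>k. r - 2 < k \<longrightarrow> x k = 0}"

definition Vplus :: "nat \<Rightarrow> (nat \<Rightarrow> rat) set" where
  "Vplus r = {x. \<forall>k. (r - 3 < k \<or> odd k) \<longrightarrow> x k = 0}"

definition eta_diag :: "nat \<Rightarrow> nat \<Rightarrow> nat \<Rightarrow> int" where
  "eta_diag r s k = (-1) ^ k * eps r s (k + 1)"

definition eta :: "nat \<Rightarrow> nat \<Rightarrow> (nat \<Rightarrow> rat) \<Rightarrow> (nat \<Rightarrow> rat) \<Rightarrow> rat" where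
  "eta r s x y = (\<Sum>k\<le>r - 2. x k * y k * of_int (eta_diag r s k))"

definition omega_basis :: "nat \<Rightarrow> nat \<Rightarrow> nat \<Rightarrow> nat \<Rightarrow> nat \<Rightarrow> int" where
  "omega_basis r s i j k = (if admissible r i j k then sign_real (theta r s i j k) else 0)"

definition omega :: "nat \<Rightarrow> nat \<Rightarrow> (nat \<Rightarrow> rat) \<Rightarrow> (nat \<Rightarrow> rat) \<Rightarrow> (nat \<Rightarrow> rat) \<Rightarrow> rat" where
  "omega r s x y z = (\<Sum>i\<le>r - 2. \<Sum>j\<le>r - 2. \<Sum>k\<le>r - 2.
      x i * y j * z k * of_int (omega_basis r s i j k))"

definition vmult :: "nat \<Rightarrow> nat \<Rightarrow> (nat \<Rightarrow> rat) \<Rightarrow> (nat \<Rightarrow> rat) \<Rightarrow> (nat \<Rightarrow> rat)" where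
  "vmult r s x y = (THE p. p \<in> Vq r \<and> (\<forall>z\<in>Vq r. eta r s p z = omega r s x y z))"

definition vbasis :: "nat \<Rightarrow> (nat \<Rightarrow> rat)" where
  "vbasis i = (\<lambda>k. if k = i then 1 else 0)"

type_synonym pmat = "rat poly \<times> rat poly \<times> rat poly \<times> rat poly"  (* (a11,a12,a21,a22) *)

definition pmat_mult :: "pmat \<Rightarrow> pmat \<Rightarrow> pmat" where
  "pmat_mult A B = (case A of (a, b, c, d) \<Rightarrow> case B of (e, f, g, h) \<Rightarrow>
      (a * e + b * g, a * f + b * h, c * e + d * g, c * f + d * h))"

definition pmat_id :: pmat where "pmat_id = (1, 0, 0, 1)"

definition pmat_inv :: "pmat \<Rightarrow> pmat" where  (* inverse of a determinant-one matrix *)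
  "pmat_inv A = (case A of (a, b, c, d) \<Rightarrow> (d, - b, - c, a))"

definition pmat_pow_sign :: "pmat \<Rightarrow> int \<Rightarrow> pmat" where
  "pmat_pow_sign A e = (if e = 1 then A else if e = -1 then pmat_inv A else pmat_id)"

definition riley_factor :: "nat \<Rightarrow> nat \<Rightarrow> nat \<Rightarrow> pmat" where
  "riley_factor r s k = pmat_pow_sign
      (if odd k then (1, 1, 0, 1) else (1, 0, [:0, 1:], 1)) (eps r s k)"

fun pmat_prod :: "(nat \<Rightarrow> pmat) \<Rightarrow> nat \<Rightarrow> nat \<Rightarrow> pmat" where
  "pmat_prod A i 0 = pmat_id"
| "pmat_prod A i (Suc n) = pmat_mult (A i) (pmat_prod A (Suc i) n)"

definition riley :: "nat \<Rightarrow> nat \<Rightarrow> rat poly" where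
  "riley r s = fst (pmat_prod (riley_factor r s) 1 (r - 1))"

end

theory Submission
  imports Defs
begin

text \<open>Write \<open>\<epsilon>\<^sub>n = (-1)^\<lfloor>ns/r\<rfloor>\<close> for the sign of \<open>[n]\<close>. Every sign in
  \<open>V\<^sub>q\<close> is a product of these, so the structure constants of \<open>V\<^sub>q\<close> in the basis
  \<open>e\<^sub>k\<close> are explicit \<open>\<plusminus>1\<close>'s, and the signed shift
  \<open>w\<^sub>k \<mapsto> w\<^sub>k\<^sub>-\<^sub>1 - \<epsilon>\<^sub>k\<^sub>+\<^sub>1 \<epsilon>\<^sub>k\<^sub>+\<^sub>2 w\<^sub>k\<^sub>+\<^sub>1\<close> commutes with the product.
  That commutation reduces to an identity between the \<open>\<epsilon>\<^sub>n\<close>, which follows from the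
  fact that \<open>\<lfloor>(x + y)s/r\<rfloor> - \<lfloor>xs/r\<rfloor> - \<lfloor>ys/r\<rfloor>\<close> is a carry \<open>0\<close> or \<open>1\<close>.
  Hence \<open>\<phi>(p) = p(shift\<^sup>2) e\<^sub>0\<close> is a ring homomorphism \<open>\<rat>[t] \<rightarrow> V\<^sub>q\<close>. It lands in
  \<open>V\<^sub>q\<^sup>+\<close>, and is onto it since \<open>\<phi>(t\<^sup>m) = e\<^sub>2\<^sub>m\<close> plus lower even basis vectors.
  Multiplying out the Riley matrices two at a time, \<open>\<phi>\<close> maps the first column of
  \<open>A\<^sub>1 \<cdots> A\<^sub>2\<^sub>j\<close> to \<open>(\<plusminus>e\<^sub>2\<^sub>j, \<Sum>\<^sub>i\<^sub><\<^sub>j \<plusminus>e\<^sub>2\<^sub>i)\<close>; at \<open>2j = r - 1\<close> the first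
  entry has left \<open>V\<^sub>q\<close>, so \<open>\<phi>(R) = 0\<close>. As \<open>deg R = (r - 1)/2\<close> while \<open>\<phi>\<close> is injective on
  polynomials of degree at most \<open>(r - 3)/2\<close>, the kernel is exactly \<open>(R)\<close>.\<close>

lemma sign_real_mult: "sign_real (x * y) = sign_real x * sign_real y"
  by (auto simp: sign_real_def zero_less_mult_iff mult_less_0_iff)

lemma sign_real_divide: "sign_real (x / y) = sign_real x * sign_real y"
proof -
  have "sign_real (inverse y) = sign_real y" by (auto simp: sign_real_def)
  then show ?thesis by (simp add: divide_inverse sign_real_mult)
qed

lemma sign_real_neg_one_power: "sign_real ((-1) ^ n) = (-1) ^ n"
  by (cases "even n") (auto simp: sign_real_def)

lemma neg_one_power_cases: "(-1 :: int) ^ n = 1 \<or> (-1 :: int) ^ n = -1"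
  by (metis neg_one_even_power neg_one_odd_power)

lemma triangle_decomp:
  fixes i j k :: nat
  assumes "i \<le> j + k" "j \<le> i + k" "k \<le> i + j" "even (i + j + k)"
  obtains a b c where "i = b + c" "j = a + c" "k = a + b"
proof
  have "even (j + k - i)" "even (i + k - j)" "even (i + j - k)"
    using assms by presburger+
  then have "2 * ((j + k - i) div 2) = j + k - i" "2 * ((i + k - j) div 2) = i + k - j"
    "2 * ((i + j - k) div 2) = i + j - k" by simp_all
  then show "i = (i + k - j) div 2 + (i + j - k) div 2" "j = (j + k - i) div 2 + (i + j - k) div 2"
    "k = (j + k - i) div 2 + (i + k - j) div 2"
    using assms(1-3) by linarith+
qed

lemma floor_div_add_cases:
  fixes x y r :: nat
  assumes "r > 0"
  shows "(x + y) div r = x div r + y div r \<or> (x + y) div r = x div r + y div r + 1"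
proof -
  have "x mod r < r" "y mod r < r" using assms by simp_all
  then have "x mod r + y mod r < 2 * r" by linarith
  then have "(x mod r + y mod r) div r < 2" by (simp add: less_mult_imp_div_less)
  then show ?thesis using div_add1_eq[of x y r] by linarith
qed

lemma theta_abc:
  "theta r s (b + c) (a + c) (a + b) = (-1) ^ (a + b + c) *
     (qfact r s (a + b + c + 1) * qfact r s a * qfact r s b * qfact r s c)
       / (qfact r s (a + b) * qfact r s (a + c) * qfact r s (b + c))"
proof -
  have "(a + c + (a + b) - (b + c)) div 2 = a" "(b + c + (a + b) - (a + c)) div 2 = b"
    "(b + c + (a + c) - (a + b)) div 2 = c" by simp_all
  then show ?thesis unfolding theta_def Let_def by (simp only:)
qed

lemma sum_shift_down_adjoint:
  fixes v g :: "nat \<Rightarrow> 'a::semiring_0"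
  shows "(\<Sum>j\<le>N. (if 1 \<le> j then v (j - 1) else 0) * g j)
       = (\<Sum>j\<le>N. v j * (if j + 1 \<le> N then g (j + 1) else 0))"
proof (cases N)
  case (Suc M)
  have "(\<Sum>j\<le>N. (if 1 \<le> j then v (j - 1) else 0) * g j) = (\<Sum>j\<le>M. v j * g (Suc j))"
    unfolding Suc sum.atMost_Suc_shift by simp
  moreover have "(\<Sum>j\<le>M. v j * (if j + 1 \<le> Suc M then g (j + 1) else 0)) = (\<Sum>j\<le>M. v j * g (Suc j))"
    by (intro sum.cong refl) auto
  ultimately show ?thesis unfolding Suc sum.atMost_Suc by simp
qed simp

lemma sum_shift_up_adjoint:
  fixes v g :: "nat \<Rightarrow> 'a::semiring_0"
  shows "(\<Sum>j\<le>N. (if j + 1 \<le> N then v (j + 1) else 0) * g j)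
       = (\<Sum>j\<le>N. v j * (if 1 \<le> j then g (j - 1) else 0))"
proof (cases N)
  case (Suc M)
  have "(\<Sum>j\<le>M. (if j + 1 \<le> Suc M then v (j + 1) else 0) * g j) = (\<Sum>j\<le>M. v (Suc j) * g j)"
    by (intro sum.cong refl) auto
  moreover have "(\<Sum>j\<le>N. v j * (if 1 \<le> j then g (j - 1) else 0)) = (\<Sum>j\<le>M. v (Suc j) * g j)"
    unfolding Suc sum.atMost_Suc_shift by simp
  ultimately show ?thesis unfolding Suc sum.atMost_Suc by simp
qed simp

lemma sum_signed_shift_adjoint:
  fixes v g c :: "nat \<Rightarrow> 'a::comm_ring"
  shows "(\<Sum>j\<le>N. ((if 1 \<le> j then v (j - 1) else 0)
                       - (if j + 1 \<le> N then c j * v (j + 1) else 0)) * g j)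
       = (\<Sum>j\<le>N. v j * ((if j + 1 \<le> N then g (j + 1) else 0)
                           - (if 1 \<le> j then c (j - 1) * g (j - 1) else 0)))"
proof -
  have "(\<Sum>j\<le>N. (if j + 1 \<le> N then c j * v (j + 1) else 0) * g j)
      = (\<Sum>j\<le>N. (if j + 1 \<le> N then v (j + 1) else 0) * (c j * g j))"
    by (intro sum.cong refl) (simp add: mult_ac)
  also have "\<dots> = (\<Sum>j\<le>N. v j * (if 1 \<le> j then c (j - 1) * g (j - 1) else 0))"
    by (rule sum_shift_up_adjoint)
  finally show ?thesis
    unfolding left_diff_distrib right_diff_distrib sum_subtractf sum_shift_down_adjoint by simp
qed

lemma sum_vbasis_mult:
  assumes "k \<le> N"
  shows "(\<Sum>j\<le>N. vbasis k j * g j) = g k"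
proof -
  have "(\<Sum>j\<le>N. vbasis k j * g j) = (\<Sum>j\<le>N. if j = k then g k else 0)"
    by (intro sum.cong refl) (auto simp: vbasis_def)
  then show ?thesis using assms by simp
qed

lemma pmat_mult_assoc: "pmat_mult (pmat_mult A B) C = pmat_mult A (pmat_mult B C)"
  by (cases A; cases B; cases C) (simp add: pmat_mult_def algebra_simps)

lemma pmat_mult_id_left: "pmat_mult pmat_id A = A"
  by (cases A) (simp add: pmat_mult_def pmat_id_def)

lemma pmat_mult_id_right: "pmat_mult A pmat_id = A"
  by (cases A) (simp add: pmat_mult_def pmat_id_def)

lemma pmat_prod_Suc_right: "pmat_prod A i (Suc n) = pmat_mult (pmat_prod A i n) (A (i + n))"
proof (induction n arbitrary: i)
  case 0
  then show ?case by (simp add: pmat_mult_id_left pmat_mult_id_right)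
next
  case (Suc n)
  have "pmat_prod A i (Suc (Suc n)) = pmat_mult (A i) (pmat_prod A (Suc i) (Suc n))" by simp
  also have "\<dots> = pmat_mult (A i) (pmat_mult (pmat_prod A (Suc i) n) (A (Suc i + n)))"
    by (simp only: Suc.IH)
  also have "\<dots> = pmat_mult (pmat_prod A i (Suc n)) (A (i + Suc n))"
    by (simp add: pmat_mult_assoc)
  finally show ?case .
qed

section \<open>Signs of quantum integers\<close>

locale two_bridge =
  fixes r s :: nat
  assumes r_ge_3: "r \<ge> 3" and odd_r: "odd r" and odd_s: "odd s"
    and coprime_rs: "coprime r s" and s_pos: "0 < s" and s_less_r: "s < r"
begin

definition angle :: real where "angle = pi * real s / real r"

lemma sin_angle_pos: "sin angle > 0"
  using s_pos s_less_r by (intro sin_gt_zero) (auto simp: angle_def field_simps)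

lemma qint_eq_sin: "qint r s n = sin (real n * angle) / sin angle"
proof -
  have diff: "cis x - cis (-x) = complex_of_real (2 * sin x) * \<i>" for x
    by (simp add: complex_eq_iff)
  have q: "qroot r s = cis angle" by (simp add: qroot_def cis_conv_exp angle_def)
  have "inverse (cis angle) ^ n = cis (-(real n * angle))" by (simp add: DeMoivre)
  then have "(qroot r s ^ n - inverse (qroot r s) ^ n) / (qroot r s - inverse (qroot r s))
      = complex_of_real (2 * sin (real n * angle)) * \<i> / (complex_of_real (2 * sin angle) * \<i>)"
    by (simp add: q DeMoivre diff)
  also have "\<dots> = complex_of_real (sin (real n * angle) / sin angle)"
    by (simp add: field_simps)
  finally show ?thesis by (simp add: qint_def)
qed

lemma not_dvd_mult_s: "1 \<le> n \<Longrightarrow> n \<le> r - 1 \<Longrightarrow> \<not> r dvd n * s"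
  using coprime_rs by (auto simp: coprime_dvd_mult_left_iff dest: dvd_imp_le)

definition floor_ns :: "nat \<Rightarrow> nat" where "floor_ns n = n * s div r"

lemma qint_sign:
  assumes "1 \<le> n" "n \<le> r - 1"
  shows "sign_real (qint r s n) = (-1) ^ floor_ns n" and "qint r s n \<noteq> 0"
proof -
  define \<rho> where "\<rho> = n * s mod r"
  have rho: "0 < \<rho>" "\<rho> < r"
    using not_dvd_mult_s[OF assms] r_ge_3 by (auto simp: \<rho>_def dvd_eq_mod_eq_0)
  have ns: "n * s = floor_ns n * r + \<rho>" by (simp add: floor_ns_def \<rho>_def)
  have "real n * angle = pi * real (n * s) / real r" by (simp add: angle_def)
  also have "\<dots> = pi * (real (floor_ns n) * real r + real \<rho>) / real r"
    by (simp only: ns) simp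
  also have "\<dots> = real (floor_ns n) * pi + pi * real \<rho> / real r"
    using r_ge_3 by (simp add: field_simps)
  finally have "sin (real n * angle) = (-1) ^ floor_ns n * sin (pi * real \<rho> / real r)"
    by (simp add: sin_add)
  moreover have "sin (pi * real \<rho> / real r) > 0"
    using rho by (intro sin_gt_zero) (auto simp: field_simps)
  ultimately have q: "qint r s n = (-1) ^ floor_ns n * (sin (pi * real \<rho> / real r) / sin angle)"
    and pos: "sin (pi * real \<rho> / real r) / sin angle > 0"
    using sin_angle_pos by (simp_all add: qint_eq_sin)
  have "sign_real (sin (pi * real \<rho> / real r) / sin angle) = 1"
    using pos by (simp add: sign_real_def)
  then show "sign_real (qint r s n) = (-1) ^ floor_ns n"
    unfolding q sign_real_mult sign_real_neg_one_power by simp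
  show "qint r s n \<noteq> 0" unfolding q using pos
    by (metis less_irrefl mult_eq_0_iff power_eq_0_iff neg_one_neq_zero)
qed

abbreviation \<epsilon> :: "nat \<Rightarrow> int" where "\<epsilon> n \<equiv> eps r s n"

lemma eps_eq: "1 \<le> n \<Longrightarrow> n \<le> r - 1 \<Longrightarrow> \<epsilon> n = (-1) ^ floor_ns n"
  using qint_sign by (simp add: eps_def)

lemma eps_cases: "1 \<le> n \<Longrightarrow> n \<le> r - 1 \<Longrightarrow> \<epsilon> n = 1 \<or> \<epsilon> n = -1"
  using eps_eq neg_one_power_cases by metis

lemma eps_square: "1 \<le> n \<Longrightarrow> n \<le> r - 1 \<Longrightarrow> \<epsilon> n * \<epsilon> n = 1"
  using eps_cases by fastforce

lemma eps_1: "\<epsilon> 1 = 1"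
  using eps_eq[of 1] r_ge_3 s_less_r by (simp add: floor_ns_def)

lemma floor_ns_add:
  "floor_ns (x + y) = floor_ns x + floor_ns y \<or> floor_ns (x + y) = floor_ns x + floor_ns y + 1"
  using floor_div_add_cases[of r "x * s" "y * s"] r_ge_3
  by (simp add: floor_ns_def add_mult_distrib)

lemma floor_ns_reflect:
  assumes "1 \<le> n" "n \<le> r - 1"
  shows "floor_ns n + floor_ns (r - n) + 1 = s"
proof -
  define m where "m = floor_ns n"
  define \<rho> where "\<rho> = n * s mod r"
  have ns: "n * s = m * r + \<rho>" by (simp add: m_def \<rho>_def floor_ns_def)
  have rho: "0 < \<rho>" "\<rho> < r"
    using not_dvd_mult_s[OF assms] r_ge_3 by (auto simp: \<rho>_def dvd_eq_mod_eq_0)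
  have "m * r \<le> n * s" using ns by simp
  also have "n * s < r * s" using s_pos assms r_ge_3 by simp
  finally have "m * r < s * r" by (simp add: mult.commute)
  then have ms: "m < s" by simp
  have "(r - n) * s = (s - m - 1) * r + (r - \<rho>)"
  proof -
    have "(m + 1) * r \<le> s * r" using ms by (intro mult_le_mono1) simp
    then show ?thesis using ns rho by (simp add: diff_mult_distrib algebra_simps)
  qed
  then have "floor_ns (r - n) = ((r - \<rho>) + (s - m - 1) * r) div r"
    by (simp add: floor_ns_def add.commute)
  also have "\<dots> = s - m - 1" using rho by (simp only: div_mult_self1) simp
  finally have "floor_ns (r - n) = s - m - 1" .
  then show ?thesis using ms by (simp add: m_def)
qed

lemma eps_reflect:
  assumes "1 \<le> n" "n \<le> r - 1"
  shows "\<epsilon> (r - n) = \<epsilon> n"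
proof -
  have "even (floor_ns n + floor_ns (r - n))" using floor_ns_reflect[OF assms] odd_s by presburger
  moreover have "\<epsilon> (r - n) = (-1) ^ floor_ns (r - n)" using assms by (intro eps_eq) auto
  ultimately show ?thesis using eps_eq[OF assms]
    by (metis even_add neg_one_even_power neg_one_odd_power)
qed

lemma eps_carry_identity:
  assumes "1 \<le> x" "1 \<le> y" "1 \<le> z" "x + y + z \<le> r - 1"
  shows "\<epsilon> (x + y) * (\<epsilon> (x + y + z) * \<epsilon> x * \<epsilon> y + \<epsilon> z)
       = \<epsilon> (x + z) * (\<epsilon> (x + y + z) * \<epsilon> x * \<epsilon> z + \<epsilon> y)"
proof -
  have carry: "\<exists>c. floor_ns (u + v) = floor_ns u + floor_ns v + c \<and> (c = 0 \<or> c = 1)" for u v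
    using floor_ns_add[of u v] by (metis add.right_neutral)
  obtain c1 where c1: "floor_ns (x + y) = floor_ns x + floor_ns y + c1" "c1 = 0 \<or> c1 = 1"
    using carry by blast
  obtain c2 where c2: "floor_ns (x + y + z) = floor_ns (x + y) + floor_ns z + c2" "c2 = 0 \<or> c2 = 1"
    using carry by blast
  obtain c3 where c3: "floor_ns (x + z) = floor_ns x + floor_ns z + c3" "c3 = 0 \<or> c3 = 1"
    using carry by blast
  obtain c4 where c4: "floor_ns (x + y + z) = floor_ns (x + z) + floor_ns y + c4" "c4 = 0 \<or> c4 = 1"
    using carry[of "x + z" y] by (auto simp: ac_simps)
  have "c1 + c2 = c3 + c4" using c1 c2 c3 c4 by linarith
  moreover have
    "\<epsilon> (x + y) = (-1) ^ floor_ns x * (-1) ^ floor_ns y * (-1) ^ c1"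
    "\<epsilon> (x + z) = (-1) ^ floor_ns x * (-1) ^ floor_ns z * (-1) ^ c3"
    "\<epsilon> (x + y + z)
       = (-1) ^ floor_ns x * (-1) ^ floor_ns y * (-1) ^ c1 * (-1) ^ floor_ns z * (-1) ^ c2"
    "\<epsilon> x = (-1) ^ floor_ns x" "\<epsilon> y = (-1) ^ floor_ns y" "\<epsilon> z = (-1) ^ floor_ns z"
    using assms by (subst eps_eq; simp add: c1 c2 c3 power_add)+
  ultimately show ?thesis
    using neg_one_power_cases[of "floor_ns x"] neg_one_power_cases[of "floor_ns y"]
      neg_one_power_cases[of "floor_ns z"] c1(2) c2(2) c3(2) c4(2)
    by auto
qed

definition fact_sign :: "nat \<Rightarrow> int" where "fact_sign n = (\<Prod>m = 1..n. \<epsilon> m)"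

lemma fact_sign_0 [simp]: "fact_sign 0 = 1"
  by (simp add: fact_sign_def)

lemma fact_sign_Suc: "fact_sign (Suc n) = fact_sign n * \<epsilon> (Suc n)"
  by (simp add: fact_sign_def)

lemma fact_sign_cases: "n \<le> r - 1 \<Longrightarrow> fact_sign n = 1 \<or> fact_sign n = -1"
proof (induction n)
  case (Suc n)
  then have "\<epsilon> (Suc n) = 1 \<or> \<epsilon> (Suc n) = -1" by (intro eps_cases) auto
  with Suc show ?case using fact_sign_Suc[of n] by auto
qed simp

lemma fact_sign_square: "n \<le> r - 1 \<Longrightarrow> fact_sign n * fact_sign n = 1"
  using fact_sign_cases by fastforce

lemma qfact_sign: "n \<le> r - 1 \<Longrightarrow> sign_real (qfact r s n) = fact_sign n \<and> qfact r s n \<noteq> 0"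
proof (induction n)
  case 0
  then show ?case by (simp add: qfact_def sign_real_def)
next
  case (Suc n)
  have "qfact r s (Suc n) = qfact r s n * qint r s (Suc n)" by (simp add: qfact_def)
  moreover have "sign_real (qint r s (Suc n)) = \<epsilon> (Suc n)" "qint r s (Suc n) \<noteq> 0"
    using qint_sign[of "Suc n"] eps_eq[of "Suc n"] Suc.prems by auto
  ultimately show ?case using Suc fact_sign_Suc[of n] by (simp add: sign_real_mult)
qed

section \<open>Signs of the structure constants\<close>

text \<open>The sign of \<open>\<langle>b + c, a + c, a + b\<rangle>\<close> divided by the signs of \<open>[a + b]!\<close>,
  \<open>[a + c]!\<close> and \<open>[b + c]!\<close>.\<close>
definition theta_red :: "nat \<Rightarrow> nat \<Rightarrow> nat \<Rightarrow> int" where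
  "theta_red a b c =
     (-1) ^ (a + b + c) * fact_sign (a + b + c + 1) * fact_sign a * fact_sign b * fact_sign c"

definition omega_red :: "nat \<Rightarrow> nat \<Rightarrow> nat \<Rightarrow> int" where
  "omega_red i j k = (let h = (i + j + k) div 2 in
     if i \<le> j + k \<and> j \<le> i + k \<and> k \<le> i + j \<and> even (i + j + k) \<and> i + j + k \<le> 2 * r - 4
     then theta_red (h - i) (h - j) (h - k) else 0)"

lemma omega_red_abc:
  assumes "i = b + c" "j = a + c" "k = a + b"
  shows "omega_red i j k = (if a + b + c \<le> r - 2 then theta_red a b c else 0)"
proof -
  have "(i + j + k) div 2 = a + b + c" using assms by simp
  moreover have "i + j + k \<le> 2 * r - 4 \<longleftrightarrow> a + b + c \<le> r - 2" using assms r_ge_3 by auto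
  ultimately show ?thesis unfolding omega_red_def Let_def using assms by (simp add: algebra_simps)
qed

lemma omega_red_eq_0:
  "\<not> (i \<le> j + k \<and> j \<le> i + k \<and> k \<le> i + j \<and> even (i + j + k)) \<Longrightarrow> omega_red i j k = 0"
  by (auto simp: omega_red_def Let_def)

lemma omega_red_commute: "omega_red i j k = omega_red j i k"
proof -
  have sum: "j + i + k = i + j + k" by simp
  show ?thesis unfolding omega_red_def Let_def theta_red_def sum
    by (rule if_cong) (simp only: add.commute[of j i], blast, simp only: ac_simps, rule refl)
qed

lemma omega_red_top: "omega_red i j (r - 1) = 0" "omega_red i (r - 1) k = 0"
proof -
  have "\<not> (r - 1 \<le> i + j \<and> i + j + (r - 1) \<le> 2 * r - 4)"
    "\<not> (r - 1 \<le> i + k \<and> i + (r - 1) + k \<le> 2 * r - 4)" using r_ge_3 by linarith+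
  then show "omega_red i j (r - 1) = 0" "omega_red i (r - 1) k = 0"
    unfolding omega_red_def Let_def by (intro if_not_P; blast)+
qed

lemma admissible_iff:
  "admissible r i j k \<longleftrightarrow>
     i \<le> j + k \<and> j \<le> i + k \<and> k \<le> i + j \<and> even (i + j + k) \<and> i + j + k \<le> 2 * r - 4"
  unfolding admissible_def by linarith

lemma omega_basis_eq:
  "omega_basis r s i j k = fact_sign i * fact_sign j * fact_sign k * omega_red i j k"
proof (cases "admissible r i j k")
  case False
  then have "omega_red i j k = 0"
    unfolding admissible_iff omega_red_def Let_def by argo
  then show ?thesis using False by (simp add: omega_basis_def)
next
  case True
  then have "i \<le> j + k" "j \<le> i + k" "k \<le> i + j" "even (i + j + k)"
    by (simp_all add: admissible_iff)
  then obtain a b c where abc: "i = b + c" "j = a + c" "k = a + b"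
    by (rule triangle_decomp)
  have "b + c + (a + c) + (a + b) \<le> 2 * r - 4" using True by (simp add: admissible_iff abc)
  then have sum: "a + b + c \<le> r - 2" using r_ge_3 by linarith
  then have "a + b + c + 1 \<le> r - 1" "a \<le> r - 1" "b \<le> r - 1" "c \<le> r - 1"
    "a + b \<le> r - 1" "a + c \<le> r - 1" "b + c \<le> r - 1" using r_ge_3 by linarith+
  then have "sign_real (theta r s i j k) = (-1) ^ (a + b + c) * fact_sign (a + b + c + 1)
      * fact_sign a * fact_sign b * fact_sign c
      * fact_sign (a + b) * fact_sign (a + c) * fact_sign (b + c)"
    unfolding abc theta_abc sign_real_divide sign_real_mult sign_real_neg_one_power
    using qfact_sign by (simp only:)
  then show ?thesis
    using True sum omega_red_abc[OF abc] by (simp add: omega_basis_def theta_red_def abc mult_ac)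
qed

lemma theta_red_Suc:
  "theta_red (Suc a) b c = - \<epsilon> (a + b + c + 2) * \<epsilon> (a + 1) * theta_red a b c"
  "theta_red a (Suc b) c = - \<epsilon> (a + b + c + 2) * \<epsilon> (b + 1) * theta_red a b c"
  "theta_red a b (Suc c) = - \<epsilon> (a + b + c + 2) * \<epsilon> (c + 1) * theta_red a b c"
  by (simp_all add: theta_red_def fact_sign_Suc eval_nat_numeral algebra_simps)

definition exchange_rel :: "nat \<Rightarrow> nat \<Rightarrow> nat \<Rightarrow> bool" where
  "exchange_rel i j k \<longleftrightarrow>
     \<epsilon> (k + 1) * (omega_red i j (k + 1) - (if 1 \<le> k then omega_red i j (k - 1) else 0))
     = \<epsilon> (j + 1) * (omega_red i (j + 1) k - (if 1 \<le> j then omega_red i (j - 1) k else 0))"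

lemma exchange_rel_interior:
  assumes ijk: "i = b + c + 1" "j = a + c + 1" "k = a + b + 1"
    and lim: "a + b + c + 2 \<le> r - 2"
  shows "exchange_rel i j k"
proof -
  define n where "n = a + b + c"
  define T where "T = \<epsilon> (n + 2) * theta_red a b c"
  have "omega_red i j (k + 1) = theta_red (Suc a) (Suc b) c"
    "omega_red i j (k - 1) = theta_red a b (Suc c)"
    "omega_red i (j + 1) k = theta_red (Suc a) b (Suc c)"
    "omega_red i (j - 1) k = theta_red a (Suc b) c"
    using omega_red_abc[of i "b + 1" c j "a + 1" "k + 1"] omega_red_abc[of i b "c + 1" j a "k - 1"]
      omega_red_abc[of i b "c + 1" "j + 1" "a + 1" k] omega_red_abc[of i "b + 1" c "j - 1" a k]
      ijk lim
    by simp_all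
  then have
    "\<epsilon> (k + 1) * (omega_red i j (k + 1) - (if 1 \<le> k then omega_red i j (k - 1) else 0))
       = T * (\<epsilon> (a + b + 2) * (\<epsilon> (n + 3) * \<epsilon> (a + 1) * \<epsilon> (b + 1) + \<epsilon> (c + 1)))"
    "\<epsilon> (j + 1) * (omega_red i (j + 1) k - (if 1 \<le> j then omega_red i (j - 1) k else 0))
       = T * (\<epsilon> (a + c + 2) * (\<epsilon> (n + 3) * \<epsilon> (a + 1) * \<epsilon> (c + 1) + \<epsilon> (b + 1)))"
    using ijk by (simp_all add: theta_red_Suc T_def n_def algebra_simps eval_nat_numeral)
  moreover have "\<epsilon> (a + b + 2) * (\<epsilon> (n + 3) * \<epsilon> (a + 1) * \<epsilon> (b + 1) + \<epsilon> (c + 1))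
      = \<epsilon> (a + c + 2) * (\<epsilon> (n + 3) * \<epsilon> (a + 1) * \<epsilon> (c + 1) + \<epsilon> (b + 1))"
    using eps_carry_identity[of "a + 1" "b + 1" "c + 1"] lim r_ge_3
    by (simp add: n_def ac_simps eval_nat_numeral)
  ultimately show ?thesis unfolding exchange_rel_def by simp
qed

lemma exchange_rel_edge:
  assumes ijk: "i = b + c + 1" "j = a + c + 1" "k = a + b + 1"
    and lim: "a + b + c + 3 = r"
  shows "exchange_rel i j k"
proof -
  have "omega_red i j (k + 1) = 0" "omega_red i (j + 1) k = 0"
    "omega_red i j (k - 1) = theta_red a b (Suc c)"
    "omega_red i (j - 1) k = theta_red a (Suc b) c"
    using omega_red_abc[of i "b + 1" c j "a + 1" "k + 1"]
      omega_red_abc[of i b "c + 1" "j + 1" "a + 1" k] omega_red_abc[of i b "c + 1" j a "k - 1"]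
      omega_red_abc[of i "b + 1" c "j - 1" a k] ijk lim
    by simp_all
  moreover have "r - (c + 1) = a + b + 2" "r - (b + 1) = a + c + 2" using lim by auto
  then have "\<epsilon> (a + b + 2) = \<epsilon> (c + 1)" "\<epsilon> (a + c + 2) = \<epsilon> (b + 1)"
    using eps_reflect[of "c + 1"] eps_reflect[of "b + 1"] lim by auto
  moreover have "\<epsilon> (c + 1) * \<epsilon> (c + 1) = 1" "\<epsilon> (b + 1) * \<epsilon> (b + 1) = 1"
    using eps_square lim by auto
  ultimately show ?thesis
    using ijk by (simp add: exchange_rel_def theta_red_Suc algebra_simps eval_nat_numeral)
qed

lemma exchange_rel_outside:
  assumes ijk: "i = b + c + 1" "j = a + c + 1" "k = a + b + 1"
    and lim: "r \<le> a + b + c + 2"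
  shows "exchange_rel i j k"
proof -
  have "omega_red i j (k + 1) = 0" "omega_red i j (k - 1) = 0"
    "omega_red i (j + 1) k = 0" "omega_red i (j - 1) k = 0"
    using omega_red_abc[of i "b + 1" c j "a + 1" "k + 1"] omega_red_abc[of i b "c + 1" j a "k - 1"]
      omega_red_abc[of i b "c + 1" "j + 1" "a + 1" k] omega_red_abc[of i "b + 1" c "j - 1" a k]
      ijk lim
    by simp_all
  then show ?thesis by (simp add: exchange_rel_def)
qed

lemma exchange_rel_c0:
  assumes ijk: "i = b" "j = a" "k = a + b + 1" and lim: "k \<le> r - 2"
  shows "exchange_rel i j k"
proof -
  have "omega_red i j (k + 1) = 0" "omega_red i (j - 1) k = 0"
    using ijk by (auto intro!: omega_red_eq_0)
  moreover have "omega_red i j (k - 1) = theta_red a b 0"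
    "omega_red i (j + 1) k = theta_red (Suc a) b 0"
    using omega_red_abc[of i b 0 j a "k - 1"] omega_red_abc[of i b 0 "j + 1" "a + 1" k] ijk lim
    by simp_all
  moreover have "\<epsilon> (a + 1) * \<epsilon> (a + 1) = 1" using eps_square lim ijk by auto
  ultimately show ?thesis
    using ijk by (simp add: exchange_rel_def theta_red_Suc algebra_simps eval_nat_numeral)
qed

lemma exchange_rel_b0:
  assumes ijk: "i = c" "j = a + c + 1" "k = a" and lim: "j \<le> r - 2"
  shows "exchange_rel i j k"
proof -
  have "omega_red c (a + c + 2) a = 0" "omega_red c (a + c + 1) (a - 1) = 0"
    by (auto intro!: omega_red_eq_0)
  moreover have "omega_red i j (k + 1) = theta_red (Suc a) 0 c"
    "omega_red i (j - 1) k = theta_red a 0 c"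
    using omega_red_abc[of i 0 c j "a + 1" "k + 1"] omega_red_abc[of i 0 c "j - 1" a k] ijk lim
    by simp_all
  moreover have "\<epsilon> (a + 1) * \<epsilon> (a + 1) = 1" using eps_square lim ijk by auto
  ultimately show ?thesis
    using ijk by (simp add: exchange_rel_def theta_red_Suc algebra_simps eval_nat_numeral)
qed

lemma exchange_rel_a0:
  assumes ijk: "i = b + c + 1" "j = c" "k = b" and lim: "i \<le> r - 2"
  shows "exchange_rel i j k"
proof -
  have "omega_red (b + c + 1) c (b - 1) = 0" "omega_red (b + c + 1) (c - 1) b = 0"
    by (auto intro!: omega_red_eq_0)
  moreover have "omega_red i j (k + 1) = theta_red 0 (Suc b) c"
    "omega_red i (j + 1) k = theta_red 0 b (Suc c)"
    using omega_red_abc[of i "b + 1" c j 0 "k + 1"] omega_red_abc[of i b "c + 1" "j + 1" 0 k]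
      ijk lim
    by simp_all
  moreover have "\<epsilon> (b + 1) * \<epsilon> (b + 1) = 1" "\<epsilon> (c + 1) * \<epsilon> (c + 1) = 1"
    using eps_square lim ijk by auto
  ultimately show ?thesis
    using ijk by (simp add: exchange_rel_def theta_red_Suc algebra_simps eval_nat_numeral)
qed

lemma exchange_rel_holds:
  assumes lim: "i \<le> r - 2" "j \<le> r - 2" "k \<le> r - 2"
  shows "exchange_rel i j k"
proof (cases "i \<le> j + k + 1 \<and> j \<le> i + k + 1 \<and> k \<le> i + j + 1 \<and> odd (i + j + k)")
  case False
  then have "omega_red i j (k + 1) = 0" "omega_red i (j + 1) k = 0"
    "(if 1 \<le> k then omega_red i j (k - 1) else 0) = 0"
    "(if 1 \<le> j then omega_red i (j - 1) k else 0) = 0"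
    by (auto intro!: omega_red_eq_0)
  then show ?thesis unfolding exchange_rel_def by simp
next
  case True
  then have "i + 1 \<le> (j + 1) + (k + 1)" "j + 1 \<le> (i + 1) + (k + 1)" "k + 1 \<le> (i + 1) + (j + 1)"
    "even ((i + 1) + (j + 1) + (k + 1))" by auto
  then obtain A B C where ABC: "i + 1 = B + C" "j + 1 = A + C" "k + 1 = A + B"
    by (rule triangle_decomp)
  consider "C = 0" | "B = 0" | "A = 0" | (pos) "A > 0" "B > 0" "C > 0" by blast
  then show ?thesis
  proof cases
    case 1
    then show ?thesis using ABC lim by (intro exchange_rel_c0[of i i j j]) auto
  next
    case 2
    then show ?thesis using ABC lim by (intro exchange_rel_b0[of i i j k]) auto
  next
    case 3
    then show ?thesis using ABC lim by (intro exchange_rel_a0[of i k j]) auto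
  next
    case pos
    then have ijk: "i = (B - 1) + (C - 1) + 1" "j = (A - 1) + (C - 1) + 1"
      "k = (A - 1) + (B - 1) + 1"
      using ABC by auto
    consider "A + B + C < r" | "A + B + C = r" | "r < A + B + C" by linarith
    then show ?thesis
    proof cases
      case 1
      then show ?thesis using pos by (intro exchange_rel_interior[OF ijk]) auto
    next
      case 2
      then show ?thesis using pos by (intro exchange_rel_edge[OF ijk]) auto
    next
      case 3
      then show ?thesis using pos by (intro exchange_rel_outside[OF ijk]) auto
    qed
  qed
qed

section \<open>The product of \<open>V\<^sub>q\<close> in coordinates\<close>

lemma eta_diag_square: "k \<le> r - 2 \<Longrightarrow> eta_diag r s k * eta_diag r s k = 1"
  using eps_square[of "k + 1"] r_ge_3 by (simp add: eta_diag_def algebra_simps flip: power_add)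

definition struct_const :: "nat \<Rightarrow> nat \<Rightarrow> nat \<Rightarrow> int" where
  "struct_const i j k = eta_diag r s k * omega_basis r s i j k"

definition vmul :: "(nat \<Rightarrow> rat) \<Rightarrow> (nat \<Rightarrow> rat) \<Rightarrow> nat \<Rightarrow> rat" where
  "vmul x y = (\<lambda>k. if k \<le> r - 2
     then (\<Sum>i\<le>r - 2. \<Sum>j\<le>r - 2. x i * y j * of_int (struct_const i j k)) else 0)"

lemma struct_const_reduced:
  "struct_const i j k
     = eta_diag r s k * (fact_sign i * fact_sign j * fact_sign k * omega_red i j k)"
  by (simp add: struct_const_def omega_basis_eq)

lemma omega_eq_sum:
  "omega r s x y z
     = (\<Sum>k\<le>r - 2. z k * (\<Sum>i\<le>r - 2. \<Sum>j\<le>r - 2. x i * y j * of_int (omega_basis r s i j k)))"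
proof -
  have "omega r s x y z
      = (\<Sum>i\<le>r - 2. \<Sum>k\<le>r - 2. \<Sum>j\<le>r - 2. x i * y j * z k * of_int (omega_basis r s i j k))"
    unfolding omega_def by (rule sum.cong[OF refl], rule sum.swap)
  also have "\<dots> = (\<Sum>k\<le>r - 2. \<Sum>i\<le>r - 2. \<Sum>j\<le>r - 2. x i * y j * z k * of_int (omega_basis r s i j k))"
    by (rule sum.swap)
  finally show ?thesis by (simp add: sum_distrib_left mult_ac)
qed

lemma vmul_eq_sum:
  "k \<le> r - 2 \<Longrightarrow>
     vmul x y k = of_int (eta_diag r s k)
       * (\<Sum>i\<le>r - 2. \<Sum>j\<le>r - 2. x i * y j * of_int (omega_basis r s i j k))"
  by (simp add: vmul_def struct_const_def sum_distrib_left mult_ac)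

text \<open>\<open>\<eta>\<close> is diagonal with entries \<open>\<plusminus>1\<close>, so it is its own inverse.\<close>
lemma vmult_eq_vmul: "vmult r s x y = vmul x y"
  unfolding vmult_def
proof (rule the_equality)
  have "eta r s (vmul x y) z = omega r s x y z" for z
    unfolding eta_def omega_eq_sum
  proof (rule sum.cong[OF refl])
    fix k assume "k \<in> {..r - 2}"
    then have "of_int (eta_diag r s k) * of_int (eta_diag r s k) = (1 :: rat)"
      and "vmul x y k = of_int (eta_diag r s k)
        * (\<Sum>i\<le>r - 2. \<Sum>j\<le>r - 2. x i * y j * of_int (omega_basis r s i j k))"
      using eta_diag_square[of k] vmul_eq_sum[of k] by (simp_all flip: of_int_mult)
    then show "vmul x y k * z k * of_int (eta_diag r s k)
        = z k * (\<Sum>i\<le>r - 2. \<Sum>j\<le>r - 2. x i * y j * of_int (omega_basis r s i j k))"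
      by (simp add: algebra_simps)
  qed
  then show "vmul x y \<in> Vq r \<and> (\<forall>z\<in>Vq r. eta r s (vmul x y) z = omega r s x y z)"
    by (simp add: vmul_def Vq_def)
next
  fix p assume p: "p \<in> Vq r \<and> (\<forall>z\<in>Vq r. eta r s p z = omega r s x y z)"
  show "p = vmul x y"
  proof
    fix k
    show "p k = vmul x y k"
    proof (cases "k \<le> r - 2")
      case False
      then show ?thesis using p by (simp add: Vq_def vmul_def)
    next
      case True
      define S where "S = (\<Sum>i\<le>r - 2. \<Sum>j\<le>r - 2. x i * y j * of_int (omega_basis r s i j k) :: rat)"
      have "vbasis k \<in> Vq r" using True by (simp add: Vq_def vbasis_def)
      then have "eta r s p (vbasis k) = omega r s x y (vbasis k)" using p by blast
      moreover have
        "eta r s p (vbasis k) = (\<Sum>j\<le>r - 2. vbasis k j * (p j * of_int (eta_diag r s j)))"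
        unfolding eta_def by (simp add: mult_ac)
      moreover have "omega r s x y (vbasis k) = S"
        using True unfolding omega_eq_sum S_def by (rule sum_vbasis_mult)
      ultimately have eq: "p k * of_int (eta_diag r s k) = S"
        using True by (simp only: sum_vbasis_mult)
      have "of_int (eta_diag r s k) * of_int (eta_diag r s k) = (1 :: rat)"
        using eta_diag_square[OF True] by (simp flip: of_int_mult)
      then have "p k = (p k * of_int (eta_diag r s k)) * of_int (eta_diag r s k)"
        by (simp add: mult.assoc)
      also have "\<dots> = vmul x y k"
        unfolding eq using vmul_eq_sum[OF True] by (simp add: S_def mult.commute)
      finally show ?thesis .
    qed
  qed
qed

lemma struct_const_commute: "struct_const i j k = struct_const j i k"
  unfolding struct_const_reduced omega_red_commute[of i j k] by (simp only: mult_ac)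

lemma vmul_commute: "vmul x y = vmul y x"
proof
  fix k
  have "(\<Sum>i\<le>r - 2. \<Sum>j\<le>r - 2. x i * y j * of_int (struct_const i j k))
      = (\<Sum>j\<le>r - 2. \<Sum>i\<le>r - 2. x i * y j * of_int (struct_const i j k))"
    by (rule sum.swap)
  also have "\<dots> = (\<Sum>j\<le>r - 2. \<Sum>i\<le>r - 2. y j * x i * of_int (struct_const j i k))"
    by (simp only: struct_const_commute[of _ _ k] mult.commute[of "x _"])
  finally show "vmul x y k = vmul y x k" by (simp add: vmul_def)
qed

lemma struct_const_unit:
  assumes "i \<le> r - 2" "k \<le> r - 2"
  shows "struct_const i 0 k = (if i = k then 1 else 0)"
proof (cases "i = k")
  case False
  then have "omega_red i 0 k = 0" by (intro omega_red_eq_0) auto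
  then show ?thesis using False by (simp add: struct_const_reduced)
next
  case True
  have "omega_red k 0 k = (-1) ^ k * fact_sign (k + 1) * fact_sign k"
    using omega_red_abc[of k k 0 0 0 k] assms by (simp add: theta_red_def)
  moreover have "\<epsilon> (k + 1) * \<epsilon> (k + 1) = 1" using eps_square assms r_ge_3 by auto
  moreover have "fact_sign k * fact_sign k = 1" using fact_sign_square assms by auto
  moreover have "(-1 :: int) ^ k * (-1) ^ k = 1" by (simp flip: power_add)
  ultimately show ?thesis
    using True by (simp add: struct_const_reduced eta_diag_def fact_sign_Suc algebra_simps)
qed

lemma vmul_unit:
  assumes "x \<in> Vq r"
  shows "vmul x (vbasis 0) = x"
proof
  fix k
  show "vmul x (vbasis 0) k = x k"
  proof (cases "k \<le> r - 2")
    case False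
    then show ?thesis using assms by (simp add: vmul_def Vq_def)
  next
    case True
    have "(\<Sum>j\<le>r - 2. x i * vbasis 0 j * of_int (struct_const i j k))
        = x i * of_int (struct_const i 0 k)"
      for i using sum_vbasis_mult[of 0 "r - 2" "\<lambda>j. x i * of_int (struct_const i j k)"]
      by (simp add: mult_ac)
    then have "vmul x (vbasis 0) k = (\<Sum>i\<le>r - 2. x i * of_int (struct_const i 0 k))"
      using True by (simp add: vmul_def)
    also have "\<dots> = (\<Sum>i\<le>r - 2. if i = k then x k else 0)"
      by (intro sum.cong refl) (simp add: struct_const_unit True)
    finally show ?thesis using True by simp
  qed
qed

lemma vmul_add_right: "vmul x (\<lambda>k. y k + z k) = (\<lambda>k. vmul x y k + vmul x z k)"
  by (rule ext) (simp add: vmul_def algebra_simps sum.distrib)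

lemma vmul_scale_right: "vmul x (\<lambda>k. c * y k) = (\<lambda>k. c * vmul x y k)"
  by (rule ext) (simp add: vmul_def sum_distrib_left mult_ac)

lemma vmul_zero_left: "vmul (\<lambda>k. 0) y = (\<lambda>k. 0)"
  by (rule ext) (simp add: vmul_def)

lemma vmul_zero_right: "vmul x (\<lambda>k. 0) = (\<lambda>k. 0)"
  by (rule ext) (simp add: vmul_def)

section \<open>The signed shift\<close>

definition shift :: "(nat \<Rightarrow> rat) \<Rightarrow> nat \<Rightarrow> rat" where
  "shift w = (\<lambda>k. if k \<le> r - 2
     then (if 1 \<le> k then w (k - 1) else 0)
       - (if k + 1 \<le> r - 2 then of_int (\<epsilon> (k + 1) * \<epsilon> (k + 2)) * w (k + 1) else 0)
     else 0)"

lemma struct_const_neighbours_reduced: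
  assumes lim: "i \<le> r - 2" "j \<le> r - 2" "k \<le> r - 2"
  defines "Q \<equiv> (-1) ^ k * fact_sign i * fact_sign j * fact_sign k"
  shows "(if 1 \<le> k then struct_const i j (k - 1) else 0)
      = - Q * (if 1 \<le> k then omega_red i j (k - 1) else 0)"
    and "(if k + 1 \<le> r - 2 then \<epsilon> (k + 1) * \<epsilon> (k + 2) * struct_const i j (k + 1) else 0)
      = - Q * omega_red i j (k + 1)"
    and "(if j + 1 \<le> r - 2 then struct_const i (j + 1) k else 0)
      = Q * \<epsilon> (k + 1) * \<epsilon> (j + 1) * omega_red i (j + 1) k"
    and "(if 1 \<le> j then \<epsilon> j * \<epsilon> (j + 1) * struct_const i (j - 1) k else 0)
      = Q * \<epsilon> (k + 1) * \<epsilon> (j + 1) * (if 1 \<le> j then omega_red i (j - 1) k else 0)"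
proof -
  have ek: "\<epsilon> (k + 1) * \<epsilon> (k + 1) = 1" using eps_square lim r_ge_3 by auto
  show "(if 1 \<le> k then struct_const i j (k - 1) else 0)
      = - Q * (if 1 \<le> k then omega_red i j (k - 1) else 0)"
  proof (cases "1 \<le> k")
    case True
    have "fact_sign k = fact_sign (k - 1) * \<epsilon> k" using fact_sign_Suc[of "k - 1"] True by simp
    moreover have "(-1 :: int) ^ k = - ((-1) ^ (k - 1))" using True
      by (metis Suc_diff_1 less_le_trans mult_minus1 power_Suc zero_less_one)
    ultimately show ?thesis
      using True unfolding Q_def struct_const_reduced eta_diag_def by (simp add: algebra_simps)
  qed simp
  show "(if k + 1 \<le> r - 2 then \<epsilon> (k + 1) * \<epsilon> (k + 2) * struct_const i j (k + 1) else 0)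
      = - Q * omega_red i j (k + 1)"
  proof (cases "k + 1 \<le> r - 2")
    case True
    have "\<epsilon> (k + 2) * \<epsilon> (k + 2) = 1" using eps_square True r_ge_3 by auto
    moreover have "fact_sign (k + 1) = fact_sign k * \<epsilon> (k + 1)" using fact_sign_Suc by simp
    moreover have "\<epsilon> (k + 1 + 1) = \<epsilon> (k + 2)" by simp
    ultimately show ?thesis
      using True ek unfolding Q_def struct_const_reduced eta_diag_def by (simp add: algebra_simps)
  next
    case False
    then have "k + 1 = r - 1" using lim r_ge_3 by auto
    then show ?thesis using False omega_red_top(1) by simp
  qed
  show "(if j + 1 \<le> r - 2 then struct_const i (j + 1) k else 0)
      = Q * \<epsilon> (k + 1) * \<epsilon> (j + 1) * omega_red i (j + 1) k"
  proof (cases "j + 1 \<le> r - 2")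
    case True
    have "fact_sign (j + 1) = fact_sign j * \<epsilon> (j + 1)" using fact_sign_Suc by simp
    then show ?thesis
      using True unfolding Q_def struct_const_reduced eta_diag_def by (simp add: algebra_simps)
  next
    case False
    then have "j + 1 = r - 1" using lim r_ge_3 by auto
    then show ?thesis using False omega_red_top(2) by simp
  qed
  show "(if 1 \<le> j then \<epsilon> j * \<epsilon> (j + 1) * struct_const i (j - 1) k else 0)
      = Q * \<epsilon> (k + 1) * \<epsilon> (j + 1) * (if 1 \<le> j then omega_red i (j - 1) k else 0)"
  proof (cases "1 \<le> j")
    case True
    have "fact_sign j = fact_sign (j - 1) * \<epsilon> j" using fact_sign_Suc[of "j - 1"] True by simp
    moreover have "\<epsilon> j * \<epsilon> j = 1" using eps_square True lim r_ge_3 by auto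
    ultimately show ?thesis
      using True unfolding Q_def struct_const_reduced eta_diag_def by (simp add: algebra_simps)
  qed simp
qed

text \<open>The coefficient of \<open>e\<^sub>k\<close> in \<open>shift (e\<^sub>i e\<^sub>j) = e\<^sub>i (shift e\<^sub>j)\<close>.\<close>
lemma struct_const_exchange:
  assumes lim: "i \<le> r - 2" "j \<le> r - 2" "k \<le> r - 2"
  shows "(if 1 \<le> k then struct_const i j (k - 1) else 0)
      - (if k + 1 \<le> r - 2 then \<epsilon> (k + 1) * \<epsilon> (k + 2) * struct_const i j (k + 1) else 0)
    = (if j + 1 \<le> r - 2 then struct_const i (j + 1) k else 0)
      - (if 1 \<le> j then \<epsilon> j * \<epsilon> (j + 1) * struct_const i (j - 1) k else 0)"
proof -
  define Q where "Q = (-1) ^ k * fact_sign i * fact_sign j * fact_sign k"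
  define V1 where "V1 = omega_red i j (k + 1)"
  define V2 where "V2 = (if 1 \<le> k then omega_red i j (k - 1) else 0)"
  define V3 where "V3 = omega_red i (j + 1) k"
  define V4 where "V4 = (if 1 \<le> j then omega_red i (j - 1) k else 0)"
  have exchange: "\<epsilon> (k + 1) * (V1 - V2) = \<epsilon> (j + 1) * (V3 - V4)"
    using exchange_rel_holds[OF lim] unfolding exchange_rel_def V1_def V2_def V3_def V4_def .
  have "\<epsilon> (k + 1) * \<epsilon> (k + 1) = 1" using eps_square lim r_ge_3 by auto
  then have "- Q * V2 - - Q * V1 = Q * \<epsilon> (k + 1) * (\<epsilon> (k + 1) * (V1 - V2))"
    by (simp add: algebra_simps)
  also have "\<dots> = Q * \<epsilon> (k + 1) * \<epsilon> (j + 1) * V3 - Q * \<epsilon> (k + 1) * \<epsilon> (j + 1) * V4"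
    unfolding exchange by (simp add: algebra_simps)
  finally show ?thesis
    unfolding struct_const_neighbours_reduced[OF lim] Q_def V1_def V2_def V3_def V4_def .
qed

lemma shift_vmul: "shift (vmul u v) = vmul u (shift v)"
proof
  fix k
  show "shift (vmul u v) k = vmul u (shift v) k"
  proof (cases "k \<le> r - 2")
    case False
    then show ?thesis by (simp add: shift_def vmul_def)
  next
    case True
    define N where "N = r - 2"
    define c where "c j = (of_int (\<epsilon> (j + 1) * \<epsilon> (j + 2)) :: rat)" for j
    define M where "M i j l = (of_int (struct_const i j l) :: rat)" for i j l
    have kN: "k \<le> N" using True by (simp add: N_def)
    have exchange:
      "(if 1 \<le> k then M i j (k - 1) else 0) - (if k + 1 \<le> N then c k * M i j (k + 1) else 0)
       = (if j + 1 \<le> N then M i (j + 1) k else 0)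
         - (if 1 \<le> j then c (j - 1) * M i (j - 1) k else 0)"
      if "i \<le> N" "j \<le> N" for i j
      using arg_cong[OF struct_const_exchange[of i j k], of "of_int :: int \<Rightarrow> rat"] that kN
      by (cases "1 \<le> k"; cases "k + 1 \<le> r - 2"; cases "j + 1 \<le> r - 2"; cases "1 \<le> j")
        (simp_all add: M_def c_def N_def)
    have "shift (vmul u v) k = (\<Sum>i\<le>N. \<Sum>j\<le>N. u i * v j *
        ((if 1 \<le> k then M i j (k - 1) else 0) - (if k + 1 \<le> N then c k * M i j (k + 1) else 0)))"
      using kN by (cases "1 \<le> k"; cases "k + 1 \<le> N")
        (simp_all add: shift_def vmul_def M_def c_def N_def sum_subtractf sum_negf sum_distrib_left
          right_diff_distrib mult_ac)
    also have "\<dots> = (\<Sum>i\<le>N. u i * (\<Sum>j\<le>N. v j *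
        ((if j + 1 \<le> N then M i (j + 1) k else 0)
         - (if 1 \<le> j then c (j - 1) * M i (j - 1) k else 0))))"
      unfolding sum_distrib_left
        by (intro sum.cong refl) (simp only: atMost_iff exchange mult.assoc)
    also have "\<dots> = (\<Sum>i\<le>N. u i * (\<Sum>j\<le>N.
        ((if 1 \<le> j then v (j - 1) else 0) - (if j + 1 \<le> N then c j * v (j + 1) else 0)) * M i j k))"
      using sum_signed_shift_adjoint[where v = v and c = c and N = N] by simp
    also have "\<dots> = (\<Sum>i\<le>N. \<Sum>j\<le>N. u i * shift v j * M i j k)"
      unfolding sum_distrib_left
      by (intro sum.cong refl) (simp add: shift_def c_def N_def mult.assoc)
    also have "\<dots> = vmul u (shift v) k"
      using kN by (simp add: vmul_def M_def N_def)
    finally show ?thesis .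
  qed
qed

lemma shift_add: "shift (\<lambda>k. a k + b k) = (\<lambda>k. shift a k + shift b k)"
  by (rule ext) (simp add: shift_def algebra_simps)

lemma shift_scale: "shift (\<lambda>k. c * a k) = (\<lambda>k. c * shift a k)"
  by (rule ext) (simp add: shift_def algebra_simps)

lemma shift_sum: "shift (\<lambda>k. \<Sum>i\<in>I. u i k) = (\<lambda>k. \<Sum>i\<in>I. shift (u i) k)"
  by (rule ext) (simp add: shift_def sum_subtractf sum_distrib_left)

lemma shift_in_Vq: "shift w \<in> Vq r"
  by (simp add: shift_def Vq_def)

section \<open>The homomorphism \<open>\<phi>\<close>\<close>

definition shift2 :: "(nat \<Rightarrow> rat) \<Rightarrow> nat \<Rightarrow> rat" where "shift2 w = shift (shift w)"

lemma shift2_scale: "shift2 (\<lambda>k. c * w k) = (\<lambda>k. c * shift2 w k)"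
  by (simp add: shift2_def shift_scale)

lemma shift2_sum: "shift2 (\<lambda>k. \<Sum>i\<in>I. u i k) = (\<lambda>k. \<Sum>i\<in>I. shift2 (u i) k)"
  by (simp add: shift2_def shift_sum)

lemma vmul_shift2: "vmul x (shift2 z) = shift2 (vmul x z)"
  by (simp add: shift2_def shift_vmul)

definition tpow :: "nat \<Rightarrow> nat \<Rightarrow> rat" where "tpow i = (shift2 ^^ i) (vbasis 0)"

lemma tpow_0: "tpow 0 = vbasis 0"
  by (simp add: tpow_def)

lemma tpow_Suc: "tpow (Suc i) = shift2 (tpow i)"
  by (simp add: tpow_def)

definition phi :: "rat poly \<Rightarrow> nat \<Rightarrow> rat" where
  "phi p = (\<lambda>k. \<Sum>i\<le>degree p. coeff p i * tpow i k)"

lemma phi_eq_sum: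
  assumes "degree p \<le> N"
  shows "phi p = (\<lambda>k. \<Sum>i\<le>N. coeff p i * tpow i k)"
proof
  fix k
  show "phi p k = (\<Sum>i\<le>N. coeff p i * tpow i k)"
    unfolding phi_def
    by (rule sum.mono_neutral_left) (use assms in \<open>auto simp: coeff_eq_0\<close>)
qed

lemma phi_0: "phi 0 = (\<lambda>k. 0)"
  by (simp add: phi_def)

lemma phi_1: "phi 1 = vbasis 0"
  by (simp add: phi_def tpow_0)

lemma phi_add: "phi (p + q) = (\<lambda>k. phi p k + phi q k)"
proof -
  define N where "N = max (degree p) (degree q)"
  have "degree p \<le> N" "degree q \<le> N" "degree (p + q) \<le> N"
    unfolding N_def by (auto intro: degree_add_le)
  then show ?thesis by (simp add: phi_eq_sum[of _ N] sum.distrib algebra_simps)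
qed

lemma phi_smult: "phi (smult c p) = (\<lambda>k. c * phi p k)"
  using degree_smult_le[of c p]
  by (simp add: phi_eq_sum[of _ "degree p"] sum_distrib_left mult_ac)

lemma phi_diff: "phi (p - q) = (\<lambda>k. phi p k - phi q k)"
proof -
  have "p - q = p + smult (-1) q" by simp
  then show ?thesis by (simp only: phi_add phi_smult) simp
qed

lemma phi_sum: "finite L \<Longrightarrow> phi (\<Sum>l\<in>L. g l) = (\<lambda>k. \<Sum>l\<in>L. phi (g l) k)"
  by (induction L rule: finite_induct) (simp_all add: phi_0 phi_add)

lemma phi_pCons: "phi (pCons a p) = (\<lambda>k. a * vbasis 0 k + shift2 (phi p) k)"
proof -
  define N where "N = degree p"
  have "shift2 (phi p) = (\<lambda>k. \<Sum>i\<le>N. shift2 (\<lambda>k. coeff p i * tpow i k) k)"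
    unfolding phi_def N_def by (rule shift2_sum)
  also have "\<dots> = (\<lambda>k. \<Sum>i\<le>N. coeff p i * tpow (Suc i) k)"
    by (simp add: shift2_scale tpow_Suc)
  finally have shift2_phi: "shift2 (phi p) = (\<lambda>k. \<Sum>i\<le>N. coeff p i * tpow (Suc i) k)" .
  have "degree (pCons a p) \<le> Suc N" unfolding N_def by (rule degree_pCons_le)
  show ?thesis
    unfolding phi_eq_sum[OF \<open>degree (pCons a p) \<le> Suc N\<close>] shift2_phi sum.atMost_Suc_shift
    by (simp add: tpow_0 mult_ac)
qed

lemma phi_in_Vq: "phi p \<in> Vq r"
proof -
  have "tpow i \<in> Vq r" for i
    using r_ge_3 shift_in_Vq by (cases i) (auto simp: tpow_0 tpow_Suc shift2_def Vq_def vbasis_def)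
  then show ?thesis by (simp add: phi_def Vq_def)
qed

lemma phi_mult: "phi (p * q) = vmul (phi p) (phi q)"
proof (induction q rule: pCons_induct)
  case 0
  then show ?case by (simp add: phi_0 vmul_zero_right)
next
  case (pCons a q)
  have "p * pCons a q = smult a p + pCons 0 (p * q)" by simp
  then have "phi (p * pCons a q) = (\<lambda>k. a * phi p k + shift2 (vmul (phi p) (phi q)) k)"
    by (simp add: phi_add phi_smult phi_pCons pCons.IH)
  also have "\<dots> = vmul (phi p) (\<lambda>k. a * vbasis 0 k + shift2 (phi q) k)"
    by (simp add: vmul_add_right vmul_scale_right vmul_unit[OF phi_in_Vq] vmul_shift2)
  finally show ?case by (simp add: phi_pCons)
qed

lemma shift_Vplus:
  assumes "w \<in> Vplus r" and "even k \<or> r - 2 < k"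
  shows "shift w k = 0"
proof (cases "r - 2 < k")
  case False
  then have "even k" using assms(2) by auto
  then have "odd (k - 1) \<or> k = 0" "odd (k + 1)" by auto
  then show ?thesis using assms(1) by (auto simp: shift_def Vplus_def)
qed (simp add: shift_def)

lemma shift_in_Vplus:
  assumes "\<And>j. even j \<or> r - 2 < j \<Longrightarrow> v j = 0"
  shows "shift v \<in> Vplus r"
  unfolding Vplus_def
proof (intro CollectI allI impI)
  fix k assume k: "r - 3 < k \<or> odd k"
  show "shift v k = 0"
  proof (cases "r - 2 < k")
    case False
    have "odd k"
    proof (rule ccontr)
      assume "\<not> odd k"
      then have "k = r - 2" using k False by auto
      moreover have "odd (r - 2)" using odd_r r_ge_3 by simp
      ultimately show False using \<open>\<not> odd k\<close> by simp
    qed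
    then have "even (k - 1)" "even (k + 1)" by auto
    then show ?thesis using assms by (auto simp: shift_def)
  qed (simp add: shift_def)
qed

lemma tpow_in_Vplus: "tpow i \<in> Vplus r"
proof (induction i)
  case 0
  then show ?case using r_ge_3 by (auto simp: tpow_0 Vplus_def vbasis_def)
next
  case (Suc i)
  then show ?case
    unfolding tpow_Suc shift2_def by (intro shift_in_Vplus shift_Vplus)
qed

lemma phi_in_Vplus: "phi p \<in> Vplus r"
  using tpow_in_Vplus by (simp add: phi_def Vplus_def)

lemma tpow_leading:
  "2 * m \<le> r - 3 \<Longrightarrow> tpow m (2 * m) = 1 \<and> (\<forall>k. 2 * m < k \<longrightarrow> tpow m k = 0)"
proof (induction m)
  case 0
  then show ?case by (simp add: tpow_0 vbasis_def)
next
  case (Suc m)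
  define w where "w = tpow m"
  have IH: "w (2 * m) = 1" "\<And>k. 2 * m < k \<Longrightarrow> w k = 0" using Suc by (auto simp: w_def)
  have lim: "2 * m + 2 \<le> r - 3" using Suc.prems by simp
  have s1: "shift w (2 * m + 1) = 1" using IH lim by (simp add: shift_def)
  have s2: "shift w j = 0" if "2 * m + 1 < j" for j
    using IH(2)[of "j - 1"] IH(2)[of "j + 1"] that by (simp add: shift_def)
  have "shift2 w (2 * m + 2) = 1"
    using s1 s2[of "2 * m + 3"] lim
      by (simp add: shift2_def shift_def[of "shift w"] eval_nat_numeral)
  moreover have "shift2 w k = 0" if "2 * m + 2 < k" for k
    using s2[of "k - 1"] s2[of "k + 1"] that by (simp add: shift2_def shift_def[of "shift w"])
  ultimately show ?case by (simp add: tpow_Suc w_def)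
qed

lemma tpow_eq_vbasis:
  assumes "2 * m \<le> r - 3" and "\<not> (even k \<and> k < 2 * m)"
  shows "tpow m k = vbasis (2 * m) k"
proof (cases "odd k")
  case True
  then show ?thesis using tpow_in_Vplus[of m] by (auto simp: Vplus_def vbasis_def)
next
  case False
  then have "2 * m \<le> k" using assms(2) by auto
  then show ?thesis using tpow_leading[OF assms(1)] by (cases "k = 2 * m") (auto simp: vbasis_def)
qed

lemma phi_nonzero:
  assumes "q \<noteq> 0" "2 * degree q \<le> r - 3"
  shows "phi q \<noteq> (\<lambda>k. 0)"
proof -
  define d where "d = degree q"
  have "coeff q i * tpow i (2 * d) = (if i = d then coeff q d else 0)" if "i \<le> d" for i
    using tpow_eq_vbasis[of i "2 * d"] that assms by (auto simp: d_def vbasis_def)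
  then have "phi q (2 * d) = coeff q d" by (simp add: phi_def d_def)
  then show ?thesis using assms by (metis d_def leading_coeff_0_iff)
qed

lemma phi_monom: "phi (monom 1 m) = tpow m"
proof
  fix k
  have "phi (monom 1 m) k = (\<Sum>i\<le>m. if i = m then tpow m k else 0)"
    unfolding phi_def degree_monom_eq[OF one_neq_zero]
      by (intro sum.cong refl) (auto simp: coeff_monom)
  then show "phi (monom 1 m) k = tpow m k" by simp
qed

lemma vbasis_in_range: "2 * m \<le> r - 3 \<Longrightarrow> \<exists>p. phi p = vbasis (2 * m)"
proof (induction m rule: less_induct)
  case (less m)
  then have "\<forall>l\<in>{..<m}. \<exists>p. phi p = vbasis (2 * l)" by auto
  then obtain P where P: "\<And>l. l < m \<Longrightarrow> phi (P l) = vbasis (2 * l)"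
    by (metis bchoice lessThan_iff)
  define p where "p = monom 1 m - (\<Sum>l<m. smult (tpow m (2 * l)) (P l))"
  have "phi p = vbasis (2 * m)"
  proof
    fix k
    have "phi p k = tpow m k - (\<Sum>l<m. tpow m (2 * l) * vbasis (2 * l) k)"
      by (simp add: p_def phi_diff phi_sum phi_smult phi_monom P)
    also have "\<dots> = vbasis (2 * m) k"
    proof (cases "even k \<and> k < 2 * m")
      case True
      then have "(\<Sum>l<m. tpow m (2 * l) * vbasis (2 * l) k)
          = (\<Sum>l<m. if l = k div 2 then tpow m k else 0)"
        by (intro sum.cong refl) (auto simp: vbasis_def)
      also have "\<dots> = tpow m k" using True by auto
      finally show ?thesis using True by (simp add: vbasis_def)
    next
      case False
      then have "(\<Sum>l<m. tpow m (2 * l) * vbasis (2 * l) k) = 0"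
        by (intro sum.neutral) (auto simp: vbasis_def)
      then show ?thesis using tpow_eq_vbasis[OF less.prems False] by simp
    qed
    finally show "phi p k = vbasis (2 * m) k" .
  qed
  then show ?case by blast
qed

lemma Vplus_in_range:
  assumes "x \<in> Vplus r"
  shows "\<exists>p. phi p = x"
proof -
  define M where "M = (r - 3) div 2"
  have "\<forall>l\<in>{..M}. \<exists>p. phi p = vbasis (2 * l)" using vbasis_in_range by (auto simp: M_def)
  then obtain P where P: "\<And>l. l \<le> M \<Longrightarrow> phi (P l) = vbasis (2 * l)"
    by (metis bchoice atMost_iff)
  define p where "p = (\<Sum>l\<le>M. smult (x (2 * l)) (P l))"
  have "phi p = x"
  proof
    fix k
    have "phi p k = (\<Sum>l\<le>M. x (2 * l) * vbasis (2 * l) k)"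
      by (simp add: p_def phi_sum phi_smult P)
    also have "\<dots> = x k"
    proof (cases "even k \<and> k \<le> r - 3")
      case True
      then have "(\<Sum>l\<le>M. x (2 * l) * vbasis (2 * l) k) = (\<Sum>l\<le>M. if l = k div 2 then x k else 0)"
        by (intro sum.cong refl) (auto simp: vbasis_def)
      also have "\<dots> = x k" using True odd_r by (auto simp: M_def)
      finally show ?thesis .
    next
      case False
      then have "(\<Sum>l\<le>M. x (2 * l) * vbasis (2 * l) k) = 0"
        using odd_r by (intro sum.neutral) (auto simp: vbasis_def M_def)
      moreover have "x k = 0" using assms False by (auto simp: Vplus_def)
      ultimately show ?thesis by simp
    qed
    finally show "phi p k = x k" .
  qed
  then show ?thesis by blast
qed

lemma range_phi: "range phi = Vplus r"
  using phi_in_Vplus Vplus_in_range by blast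

section \<open>The Riley polynomial and the kernel of \<open>\<phi>\<close>\<close>

lemma riley_factor_odd:
  assumes "1 \<le> k" "k \<le> r - 1" "odd k"
  shows "riley_factor r s k = (1, [:of_int (\<epsilon> k):], 0, 1)"
proof -
  have "(-1 :: rat poly) = [:-1:]" by (simp add: one_pCons)
  then show ?thesis using eps_cases[OF assms(1,2)] assms(3)
    by (auto simp: riley_factor_def pmat_pow_sign_def pmat_inv_def one_pCons)
qed

lemma riley_factor_even:
  assumes "1 \<le> k" "k \<le> r - 1" "even k"
  shows "riley_factor r s k = (1, 0, [:0, of_int (\<epsilon> k):], 1)"
  using eps_cases[OF assms(1,2)] assms(3)
  by (auto simp: riley_factor_def pmat_pow_sign_def pmat_inv_def)

text \<open>The first column of \<open>A\<^sub>1 \<cdots> A\<^sub>k\<close>.\<close>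
definition partial11 :: "nat \<Rightarrow> rat poly" where
  "partial11 k = fst (pmat_prod (riley_factor r s) 1 k)"

definition partial21 :: "nat \<Rightarrow> rat poly" where
  "partial21 k = fst (snd (pmat_prod (riley_factor r s) 1 k))"

lemma riley_eq_partial11: "riley r s = partial11 (r - 1)"
  by (simp add: riley_def partial11_def)

lemma partial_0: "partial11 0 = 1" "partial21 0 = 0"
  by (simp_all add: partial11_def partial21_def pmat_id_def)

lemma partial_double_step:
  assumes "2 * j + 2 \<le> r - 1"
  shows "partial21 (2 * j + 2)
      = partial21 (2 * j) + smult (of_int (\<epsilon> (2 * j + 1))) (partial11 (2 * j))"
    and "partial11 (2 * j + 2)
      = partial11 (2 * j) + pCons 0 (smult (of_int (\<epsilon> (2 * j + 2))) (partial21 (2 * j + 2)))"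
proof -
  obtain a b c d where M: "pmat_prod (riley_factor r s) 1 (2 * j) = (a, b, c, d)"
    by (metis prod.exhaust)
  have "riley_factor r s (2 * j + 1) = (1, [:of_int (\<epsilon> (2 * j + 1)):], 0, 1)"
    "riley_factor r s (2 * j + 2) = (1, 0, [:0, of_int (\<epsilon> (2 * j + 2)):], 1)"
    using assms by (auto intro: riley_factor_odd riley_factor_even)
  then have "pmat_prod (riley_factor r s) 1 (2 * j + 2) = pmat_mult (pmat_mult (a, b, c, d)
      (1, [:of_int (\<epsilon> (2 * j + 1)):], 0, 1)) (1, 0, [:0, of_int (\<epsilon> (2 * j + 2)):], 1)"
    using pmat_prod_Suc_right[of "riley_factor r s" 1 "2 * j + 1"]
      pmat_prod_Suc_right[of "riley_factor r s" 1 "2 * j"] M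
    by (simp add: ac_simps)
  then show "partial21 (2 * j + 2)
      = partial21 (2 * j) + smult (of_int (\<epsilon> (2 * j + 1))) (partial11 (2 * j))"
    and "partial11 (2 * j + 2)
      = partial11 (2 * j) + pCons 0 (smult (of_int (\<epsilon> (2 * j + 2))) (partial21 (2 * j + 2)))"
    using M by (simp_all add: partial11_def partial21_def pmat_mult_def algebra_simps)
qed

lemma partial_degree:
  "2 * j \<le> r - 1 \<Longrightarrow> (\<forall>i>j. coeff (partial11 (2 * j)) i = 0) \<and> coeff (partial11 (2 * j)) j \<noteq> 0
     \<and> (\<forall>i\<ge>j. coeff (partial21 (2 * j)) i = 0)"
proof (induction j)
  case 0
  then show ?case by (simp add: partial_0 coeff_1)
next
  case (Suc j)
  then have lim: "2 * j + 2 \<le> r - 1" and IH: "\<forall>i>j. coeff (partial11 (2 * j)) i = 0"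
    "coeff (partial11 (2 * j)) j \<noteq> 0" "\<forall>i\<ge>j. coeff (partial21 (2 * j)) i = 0"
    by auto
  have "\<epsilon> (2 * j + 1) \<noteq> 0" "\<epsilon> (2 * j + 2) \<noteq> 0"
    using eps_cases[of "2 * j + 1"] eps_cases[of "2 * j + 2"] lim by auto
  moreover have cq: "coeff (partial21 (2 * j + 2)) i
      = coeff (partial21 (2 * j)) i + of_int (\<epsilon> (2 * j + 1)) * coeff (partial11 (2 * j)) i" for i
    unfolding partial_double_step(1)[OF lim] by simp
  moreover have "coeff (partial11 (2 * j + 2)) i = coeff (partial11 (2 * j)) i
      + (if i = 0 then 0 else of_int (\<epsilon> (2 * j + 2)) * coeff (partial21 (2 * j + 2)) (i - 1))" for i
    unfolding partial_double_step(2)[OF lim] by (cases i) simp_all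
  ultimately show ?case using IH by (auto simp: eval_nat_numeral)
qed

lemma riley_degree: "riley r s \<noteq> 0" "degree (riley r s) = (r - 1) div 2"
proof -
  define n where "n = (r - 1) div 2"
  have "riley r s = partial11 (2 * n)"
    using odd_r riley_eq_partial11 by (simp add: n_def)
  moreover have "\<forall>i>n. coeff (partial11 (2 * n)) i = 0" "coeff (partial11 (2 * n)) n \<noteq> 0"
    using partial_degree[of n] by (auto simp: n_def)
  ultimately show "riley r s \<noteq> 0" "degree (riley r s) = (r - 1) div 2"
    by (auto simp: n_def intro: le_antisym degree_le le_degree)
qed

lemma shift_vbasis:
  assumes "n \<le> r - 2"
  shows "shift (vbasis n) = (\<lambda>k. (if k = n + 1 \<and> n + 1 \<le> r - 2 then 1 else 0)
    - (if k + 1 = n then of_int (\<epsilon> n * \<epsilon> (n + 1)) else 0))"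
  using assms by (intro ext) (auto simp: shift_def vbasis_def)

definition signed_even_sum :: "nat \<Rightarrow> nat \<Rightarrow> rat" where
  "signed_even_sum j = (\<lambda>l. \<Sum>i<j. of_int (fact_sign (2 * i + 1)) * vbasis (2 * i) l)"

text \<open>The sum telescopes, because \<open>fact_sign (2i - 1) = \<epsilon> (2i) \<epsilon> (2i + 1) fact_sign (2i + 1)\<close>.\<close>
lemma shift_signed_even_sum:
  "2 * j \<le> r - 3 \<Longrightarrow>
     shift (signed_even_sum (Suc j)) = (\<lambda>l. of_int (fact_sign (2 * j + 1)) * vbasis (2 * j + 1) l)"
proof (induction j)
  case 0
  have "signed_even_sum (Suc 0) = vbasis 0"
    using eps_1 by (simp add: signed_even_sum_def fact_sign_def)
  moreover have "shift (vbasis 0) = vbasis 1"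
    using shift_vbasis[of 0] r_ge_3 by (simp add: vbasis_def Suc_le_eq)
  ultimately show ?case using eps_1 by (simp add: fact_sign_def)
next
  case (Suc j)
  have lim: "2 * j + 2 \<le> r - 3" using Suc.prems by simp
  then have "2 * j + 3 \<le> r - 2" by linarith
  have "shift (vbasis (2 * j + 2)) = (\<lambda>l. (if l = 2 * j + 3 then 1 else 0)
      - (if l = 2 * j + 1 then of_int (\<epsilon> (2 * j + 2) * \<epsilon> (2 * j + 3)) else 0))"
    using shift_vbasis[of "2 * j + 2"] lim \<open>2 * j + 3 \<le> r - 2\<close>
    by (simp add: eval_nat_numeral cong: if_cong)
  moreover have "signed_even_sum (Suc (Suc j))
      = (\<lambda>l. signed_even_sum (Suc j) l + of_int (fact_sign (2 * j + 3)) * vbasis (2 * j + 2) l)"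
    by (simp add: signed_even_sum_def eval_nat_numeral)
  ultimately have "shift (signed_even_sum (Suc (Suc j)))
      = (\<lambda>l. of_int (fact_sign (2 * j + 1)) * vbasis (2 * j + 1) l
          + of_int (fact_sign (2 * j + 3)) * ((if l = 2 * j + 3 then 1 else 0)
            - (if l = 2 * j + 1 then of_int (\<epsilon> (2 * j + 2) * \<epsilon> (2 * j + 3)) else 0)))"
    using Suc.IH lim by (simp add: shift_add shift_scale)
  also have "\<dots> = (\<lambda>l. of_int (fact_sign (2 * Suc j + 1)) * vbasis (2 * Suc j + 1) l)"
  proof -
    have "\<epsilon> (2 * j + 2) = 1 \<or> \<epsilon> (2 * j + 2) = -1" "\<epsilon> (2 * j + 3) = 1 \<or> \<epsilon> (2 * j + 3) = -1"
      using eps_cases lim by auto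
    then show ?thesis by (intro ext) (auto simp: fact_sign_Suc vbasis_def eval_nat_numeral)
  qed
  finally show ?case .
qed

definition even_basis :: "nat \<Rightarrow> nat \<Rightarrow> rat" where
  "even_basis j = (if 2 * j \<le> r - 3 then vbasis (2 * j) else (\<lambda>l. 0))"

lemma phi_partial:
  "2 * j \<le> r - 1 \<Longrightarrow> phi (partial11 (2 * j)) = (\<lambda>l. of_int (fact_sign (2 * j)) * even_basis j l)
     \<and> phi (partial21 (2 * j)) = signed_even_sum j"
proof (induction j)
  case 0
  then show ?case using r_ge_3
    by (simp add: partial_0 phi_0 phi_1 even_basis_def signed_even_sum_def)
next
  case (Suc j)
  then have lim: "2 * j + 2 \<le> r - 1"
    and IH: "phi (partial11 (2 * j)) = (\<lambda>l. of_int (fact_sign (2 * j)) * even_basis j l)"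
      "phi (partial21 (2 * j)) = signed_even_sum j"
    by auto
  have f: "fact_sign (2 * j + 1) = fact_sign (2 * j) * \<epsilon> (2 * j + 1)"
    "fact_sign (2 * j + 2) = fact_sign (2 * j + 1) * \<epsilon> (2 * j + 2)"
    by (simp_all add: fact_sign_Suc eval_nat_numeral)
  have ee: "\<epsilon> (2 * j + 1) * \<epsilon> (2 * j + 1) = 1" "\<epsilon> (2 * j + 2) * \<epsilon> (2 * j + 2) = 1"
    using eps_square lim by auto
  have even_basis_j: "even_basis j = vbasis (2 * j)" using lim odd_r by (auto simp: even_basis_def)
  have Q: "phi (partial21 (2 * j + 2)) = signed_even_sum (Suc j)"
    unfolding partial_double_step(1)[OF lim] using IH f
    by (simp add: phi_add phi_smult even_basis_j signed_even_sum_def algebra_simps)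
  have "shift (vbasis (2 * j + 1)) = (\<lambda>l. (if l = 2 * j + 2 \<and> 2 * j + 2 \<le> r - 2 then 1 else 0)
      - (if l = 2 * j then of_int (\<epsilon> (2 * j + 1) * \<epsilon> (2 * j + 2)) else 0))"
    using shift_vbasis[of "2 * j + 1"] lim by (simp add: eval_nat_numeral cong: if_cong)
  then have "shift2 (signed_even_sum (Suc j)) = (\<lambda>l. of_int (fact_sign (2 * j + 1))
      * ((if l = 2 * j + 2 \<and> 2 * j + 2 \<le> r - 2 then 1 else 0)
         - (if l = 2 * j then of_int (\<epsilon> (2 * j + 1) * \<epsilon> (2 * j + 2)) else 0)))"
    using shift_signed_even_sum[of j] lim odd_r by (simp add: shift2_def shift_scale)
  then have "phi (partial11 (2 * j + 2)) = (\<lambda>l. of_int (fact_sign (2 * j)) * vbasis (2 * j) l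
      + of_int (\<epsilon> (2 * j + 2)) * (of_int (fact_sign (2 * j + 1))
        * ((if l = 2 * j + 2 \<and> 2 * j + 2 \<le> r - 2 then 1 else 0)
           - (if l = 2 * j then of_int (\<epsilon> (2 * j + 1) * \<epsilon> (2 * j + 2)) else 0))))"
    unfolding partial_double_step(2)[OF lim]
    using IH(1) Q by (simp add: phi_add phi_pCons phi_smult shift2_scale even_basis_j)
  also have "\<dots> = (\<lambda>l. of_int (fact_sign (2 * j + 2)) * even_basis (Suc j) l)"
  proof
    fix l
    have "2 * j + 2 \<le> r - 2 \<longleftrightarrow> 2 * Suc j \<le> r - 3" using odd_r by presburger
    then show "of_int (fact_sign (2 * j)) * vbasis (2 * j) l
      + of_int (\<epsilon> (2 * j + 2)) * (of_int (fact_sign (2 * j + 1))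
        * ((if l = 2 * j + 2 \<and> 2 * j + 2 \<le> r - 2 then 1 else 0)
           - (if l = 2 * j then of_int (\<epsilon> (2 * j + 1) * \<epsilon> (2 * j + 2)) else 0)))
      = of_int (fact_sign (2 * j + 2)) * even_basis (Suc j) l"
      using eps_cases[of "2 * j + 1"] eps_cases[of "2 * j + 2"] lim
      by (cases "l = 2 * j") (auto simp: fact_sign_Suc even_basis_def vbasis_def)
  qed
  finally have
    "phi (partial11 (2 * j + 2)) = (\<lambda>l. of_int (fact_sign (2 * j + 2)) * even_basis (Suc j) l)" .
  then show ?case using Q by (simp add: eval_nat_numeral)
qed

lemma phi_riley: "phi (riley r s) = (\<lambda>l. 0)"
proof -
  define n where "n = (r - 1) div 2"
  have "riley r s = partial11 (2 * n)" using odd_r riley_eq_partial11 by (simp add: n_def)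
  moreover have "\<not> 2 * n \<le> r - 3" using odd_r r_ge_3 by (simp add: n_def)
  then have "even_basis n = (\<lambda>l. 0)" by (simp add: even_basis_def)
  ultimately show ?thesis using phi_partial[of n] odd_r by (simp add: n_def)
qed

lemma phi_kernel: "phi p = (\<lambda>k. 0) \<longleftrightarrow> riley r s dvd p"
proof
  assume "riley r s dvd p"
  then obtain g where "p = riley r s * g" by (elim dvdE)
  then show "phi p = (\<lambda>k. 0)" by (simp add: phi_mult phi_riley vmul_zero_left)
next
  assume p: "phi p = (\<lambda>k. 0)"
  have "phi (p div riley r s * riley r s) = (\<lambda>k. 0)"
    by (simp add: phi_mult phi_riley vmul_commute[of "phi (p div riley r s)"] vmul_zero_left)
  then have "phi (p mod riley r s) = (\<lambda>k. 0)"
    using p by (simp add: phi_diff flip: minus_div_mult_eq_mod)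
  moreover have "2 * degree (p mod riley r s) \<le> r - 3" if "p mod riley r s \<noteq> 0"
    using degree_mod_less[OF riley_degree(1), of p] that riley_degree(2) odd_r r_ge_3 by presburger
  ultimately have "p mod riley r s = 0" using phi_nonzero by blast
  then show "riley r s dvd p" by (simp add: mod_eq_0_iff_dvd)
qed

end

theorem theorem1:
  fixes r s :: nat
  assumes "r \<ge> 3" "odd r" "odd s" "coprime r s" "0 < s" "s < r"
  shows "\<exists>\<phi> :: rat poly \<Rightarrow> (nat \<Rightarrow> rat).
     \<phi> ` UNIV = Vplus r \<and>
     \<phi> 1 = vbasis 0 \<and>
     (\<forall>p q. \<phi> (p + q) = (\<lambda>k. \<phi> p k + \<phi> q k)) \<and>
     (\<forall>c p. \<phi> (smult c p) = (\<lambda>k. c * \<phi> p k)) \<and>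
     (\<forall>p q. \<phi> (p * q) = vmult r s (\<phi> p) (\<phi> q)) \<and>
     (\<forall>p. \<phi> p = (\<lambda>k. 0) \<longleftrightarrow> riley r s dvd p)"
proof -
  interpret two_bridge r s
    using assms by unfold_locales
  show ?thesis
    using range_phi phi_add phi_smult phi_kernel
    by (intro exI[of _ phi]) (simp add: phi_1 phi_mult vmult_eq_vmul)
qed

end
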